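(* Let $d\ge 2$ and $t\ge 1$ be integers. Let $v_1,\ldots,v_d$ be pairwise different positive real numbers and $\alpha_1,\ldots,\alpha_{t+d-1}$ pairwise different nonnegative integers, and let $V\in\mathbb{R}^{(t+d-1)\times d}$ be the matrix with entries $V_{j,i}=v_i^{\alpha_j}$. Let $n=\binom{t+d-1}{d-1}$ and let $Q\in\mathbb{R}^{n\times d}$ be the matrix whose rows are indexed by the $(d-1)$-element subsets $S\subset\{1,\ldots,t+d-1\}$ and whose columns are indexed by $i\in\{1,\ldots,d\}$, with entry $Q_{S,i}$ equal to the minor of $V$ formed by the rows in $S$ and the columns in $\{1,\ldots,d\}\setminus\{i\}$. Denote the rows of $Q$ by $Q_1,\ldots,Q_n$ and let $x\in\mathbb{R}^d$ be a vector of unknowns. Then $\{(Q_jx)^t\}_{j=1}^n$ is a basis of $\mathrm{Hom}_t(\mathbb{R}^d)$.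
   Context: $\mathrm{Hom}_t(\mathbb{R}^d)$ denotes the real vector space of homogeneous polynomials of degree $t$ in $d$ real variables (together with the zero polynomial); its dimension is $\binom{t+d-1}{d-1}$. *)

theory Defs
  imports "HOL-Library.Function_Algebras" "Jordan_Normal_Form.Determinant"
begin

(* Indices are 0-based: variables x 0 .. x (d-1), rows 0..t+d-2 of V. *)

definition fscale :: "real \<Rightarrow> ('a \<Rightarrow> real) \<Rightarrow> ('a \<Rightarrow> real)" where
  "fscale c f = (\<lambda>x. c * f x)"

definition monomial_fun :: "nat \<Rightarrow> (nat \<Rightarrow> nat) \<Rightarrow> (nat \<Rightarrow> real) \<Rightarrow> real" where
  "monomial_fun d a = (\<lambda>x. \<Prod>i<d. x i ^ a i)"

(* Hom_t(R^d): span of all monomials of total degree t in d variables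
   (as polynomial functions; R is infinite so this is faithful) *)
definition Hom :: "nat \<Rightarrow> nat \<Rightarrow> ((nat \<Rightarrow> real) \<Rightarrow> real) set" where
  "Hom t d = module.span fscale
      {monomial_fun d a | a. (\<forall>i\<ge>d. a i = 0) \<and> (\<Sum>i<d. a i) = t}"

definition vandermonde :: "(nat \<Rightarrow> real) \<Rightarrow> (nat \<Rightarrow> nat) \<Rightarrow> nat \<Rightarrow> nat \<Rightarrow> real" where
  "vandermonde v \<alpha> j i = v i ^ \<alpha> j"

definition Qentry :: "nat \<Rightarrow> (nat \<Rightarrow> real) \<Rightarrow> (nat \<Rightarrow> nat) \<Rightarrow> nat set \<Rightarrow> nat \<Rightarrow> real" where
  "Qentry d v \<alpha> S i =
     det (mat (d - 1) (d - 1) (\<lambda>(r, c).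
        vandermonde v \<alpha> (sorted_list_of_set S ! r) (sorted_list_of_set ({0..<d} - {i}) ! c)))"

definition Qpow :: "nat \<Rightarrow> nat \<Rightarrow> (nat \<Rightarrow> real) \<Rightarrow> (nat \<Rightarrow> nat) \<Rightarrow> nat set \<Rightarrow> (nat \<Rightarrow> real) \<Rightarrow> real" where
  "Qpow t d v \<alpha> S = (\<lambda>x. (\<Sum>i<d. Qentry d v \<alpha> S i * x i) ^ t)"

end

theory Submission
  imports Defs
begin

text \<open>
  Each (Q_S x)^t lies in Hom_t(R^d), and there are binomial (t+d-1) (d-1) = binomial (t+d-1) t
  of them, at least as many as monomials of degree t; so it suffices to prove linear
  independence. For a (d-1)-subset T with complement U, so that |U| = t, apply to a polynomial
  function its t-th mixed finite difference at 0 in the directions u_j = ((-1)^i v_i^(alpha_j))_i,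
  j in U. By polarization this sends the t-th power of a linear form l to t! * prod_(j in U) l(u_j).
  By Laplace expansion, Q_S u_j is the determinant of the rows {j} + S of V, which vanishes iff
  j is in S: a generalized Vandermonde matrix with distinct positive nodes is nonsingular,
  because by Rolle's theorem a real polynomial with k monomials has fewer than k positive roots.
  Hence the functional indexed by T vanishes on (Q_S x)^t iff S differs from T, and these
  functionals witness the independence.
\<close>

section \<open>Polarization and mixed differences\<close>

lemma sum_fun_apply: "sum f A x = (\<Sum>a\<in>A. f a x)"
  by (induction A rule: infinite_finite_induct) auto

lemma alternating_sum_subset_sum_powers:
  fixes a :: "'j \<Rightarrow> 'a::{comm_ring_1,semiring_char_0}"
  assumes "finite J" "m \<le> card J"
  shows "(\<Sum>A\<in>Pow J. (-1) ^ (card J - card A) * sum a A ^ m)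
     = (if m = card J then fact m * prod a J else 0)"
  using assms
proof (induction J arbitrary: m rule: finite_induct)
  case empty
  then show ?case by simp
next
  case (insert x J)
  let ?D = "\<lambda>i. \<Sum>A\<in>Pow J. (-1) ^ (card J - card A) * sum a A ^ i"
  have card_insert: "card (insert x J) = Suc (card J)"
    using insert by simp
  have IH: "\<And>i. i < m \<Longrightarrow> ?D i = (if i = card J then fact i * prod a J else 0)"
    using insert.IH insert.prems card_insert by simp
  have inj_on_insert_Pow: "inj_on (insert x) (Pow J)"
    using insert.hyps by (auto simp: inj_on_def)
  have sign: "(-1) ^ (Suc (card J) - card A) = - ((-1) ^ (card J - card A) :: 'a)"
    if "A \<subseteq> J" for A
    using card_mono[OF insert.hyps(1) that] by (simp add: Suc_diff_le)
  have "(\<Sum>A\<in>Pow (insert x J). (-1) ^ (card (insert x J) - card A) * sum a A ^ m)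
      = (\<Sum>A\<in>Pow J. (-1) ^ (Suc (card J) - card A) * sum a A ^ m)
        + (\<Sum>A\<in>Pow J. (-1) ^ (Suc (card J) - card (insert x A)) * sum a (insert x A) ^ m)"
    unfolding Pow_insert card_insert using insert.hyps inj_on_insert_Pow
    by (subst sum.union_disjoint) (auto simp: sum.reindex)
  also have "\<dots> = (\<Sum>A\<in>Pow J. (-1) ^ (card J - card A) * ((sum a A + a x) ^ m - sum a A ^ m))"
    using insert.hyps
    by (auto simp: sign card_insert_if finite_subset subset_iff algebra_simps
        sum_subtractf sum.distrib[symmetric] intro!: sum.cong)
  also have "\<dots> = (\<Sum>i<m. of_nat (m choose i) * a x ^ (m - i) * ?D i)"
    unfolding binomial_ring[of _ "a x"] lessThan_Suc_atMost[symmetric]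
    by (simp add: sum_distrib_left sum_distrib_right algebra_simps sum.swap[of _ "{..<m}"])
  also have "\<dots> = (if m = card (insert x J) then fact m * prod a (insert x J) else 0)"
  proof (cases "m = Suc (card J)")
    case True
    then have "(\<Sum>i<m. of_nat (m choose i) * a x ^ (m - i) * ?D i)
        = of_nat m * a x * (fact (card J) * prod a J)"
      by (simp add: IH if_distrib cong: if_cong)
    then show ?thesis
      using True insert.hyps by (simp add: card_insert algebra_simps)
  next
    case False
    then show ?thesis
      using insert.prems card_insert by (simp add: IH)
  qed
  finally show ?case .
qed

lemma (in vector_space) span_eq_if_independent_card_ge:
  assumes "finite M" "independent B" "B \<subseteq> span M" "card M \<le> card B"
  shows "span B = span M"
proof
  show "span B \<subseteq> span M"
    using assms(3) span_minimal subspace_span by blast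
  have "a \<in> span B" if "a \<in> M" for a
  proof (rule ccontr)
    assume a_notin: "a \<notin> span B"
    then have "independent (insert a B)"
      using assms(2) independent_insertI by blast
    moreover have "insert a B \<subseteq> span M"
      using assms(3) that span_base by blast
    ultimately have "card (insert a B) \<le> card M"
      using independent_span_bound[OF assms(1)] by blast
    moreover have "finite B" "a \<notin> B"
      using independent_span_bound[OF assms(1,2,3)] a_notin span_base by auto
    ultimately show False
      using assms(4) by simp
  qed
  then show "span M \<subseteq> span B"
    using span_minimal subspace_span by blast
qed

lemma (in vector_space) biorthogonal_inj_on_independent:
  fixes f :: "'i \<Rightarrow> 'b" and \<phi> :: "'i \<Rightarrow> 'b \<Rightarrow> 'a"
  assumes hom: "\<And>i. i \<in> I \<Longrightarrow> module_hom scale (*) (\<phi> i)"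
    and biorth: "\<And>i j. i \<in> I \<Longrightarrow> j \<in> I \<Longrightarrow> \<phi> i (f j) \<noteq> 0 \<longleftrightarrow> i = j"
  shows "inj_on f I \<and> independent (f ` I)"
proof
  show "inj_on f I"
    by (metis biorth inj_onI)
  show "independent (f ` I)"
  proof
    assume "dependent (f ` I)"
    then obtain F c b where F: "finite F" "F \<subseteq> f ` I" "(\<Sum>x\<in>F. scale (c x) x) = 0"
      and b: "b \<in> F" "c b \<noteq> 0"
      unfolding dependent_explicit by blast
    then obtain i where i: "i \<in> I" "b = f i"
      by blast
    have "0 = \<phi> i (\<Sum>x\<in>F. scale (c x) x)"
      using F(3) module_hom.zero[OF hom[OF i(1)]] by simp
    also have "\<dots> = (\<Sum>x\<in>F. c x * \<phi> i x)"
      unfolding module_hom.sum[OF hom[OF i(1)]] module_hom.scale[OF hom[OF i(1)]] ..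
    also have "\<dots> = c b * \<phi> i b + (\<Sum>x\<in>F - {b}. c x * \<phi> i x)"
      by (rule sum.remove[OF F(1) b(1)])
    also have "(\<Sum>x\<in>F - {b}. c x * \<phi> i x) = 0"
      using F(2) i biorth by (intro sum.neutral) fastforce
    finally show False
      using b(2) biorth[OF i(1) i(1)] i(2) by simp
  qed
qed

interpretation fs: vector_space fscale
  by unfold_locales (auto simp: fscale_def fun_eq_iff algebra_simps)

definition mixed_difference :: "'j set \<Rightarrow> ('j \<Rightarrow> 'v::comm_monoid_add) \<Rightarrow> ('v \<Rightarrow> real) \<Rightarrow> real" where
  "mixed_difference U u f = (\<Sum>A\<in>Pow U. (-1) ^ (card U - card A) * f (\<Sum>j\<in>A. u j))"

lemma module_hom_mixed_difference: "module_hom fscale (*) (mixed_difference U u)"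
  by unfold_locales (simp_all add: mixed_difference_def fscale_def sum.distrib
      sum_distrib_left algebra_simps)

lemma mixed_difference_power_linear_form:
  fixes u :: "'j \<Rightarrow> nat \<Rightarrow> real"
  assumes "finite U"
  shows "mixed_difference U u (\<lambda>x. (\<Sum>i<d. q i * x i) ^ card U)
    = fact (card U) * (\<Prod>j\<in>U. \<Sum>i<d. q i * u j i)"
proof -
  have "(\<Sum>i<d. q i * (\<Sum>j\<in>A. u j) i) = (\<Sum>j\<in>A. \<Sum>i<d. q i * u j i)" for A
    by (simp add: sum_fun_apply sum_distrib_left sum.swap[of _ "{..<d}"])
  then show ?thesis
    unfolding mixed_difference_def
    using alternating_sum_subset_sum_powers[OF assms order_refl] by simp
qed

section \<open>Homogeneous polynomials\<close>

definition monomials :: "nat \<Rightarrow> nat \<Rightarrow> ((nat \<Rightarrow> real) \<Rightarrow> real) set" where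
  "monomials t d = {monomial_fun d a | a. (\<forall>i\<ge>d. a i = 0) \<and> (\<Sum>i<d. a i) = t}"

lemma Hom_eq_span_monomials: "Hom t d = fs.span (monomials t d)"
  unfolding Hom_def monomials_def ..

lemma fun_upd_Suc_eq: "a(i := Suc (a i)) = (\<lambda>j. a j + (if j = i then 1 else 0))"
  by auto

lemma monomial_fun_increment:
  assumes "i < d"
  shows "monomial_fun d (a(i := Suc (a i))) = (\<lambda>x. x i * monomial_fun d a x)"
  unfolding monomial_fun_def fun_upd_Suc_eq power_add prod.distrib
  using assms by (simp add: if_distrib mult.commute cong: if_cong)

lemma times_var_mem_span_monomials:
  assumes "f \<in> fs.span (monomials t d)" "i < d"
  shows "(\<lambda>x. x i * f x) \<in> fs.span (monomials (Suc t) d)"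
proof -
  let ?times_var = "\<lambda>f x. x i * f x"
  have hom: "module_hom fscale fscale ?times_var"
    by unfold_locales (simp_all add: fscale_def fun_eq_iff algebra_simps)
  have "?times_var ` monomials t d \<subseteq> monomials (Suc t) d"
  proof
    fix m assume "m \<in> ?times_var ` monomials t d"
    then obtain a where m: "m = ?times_var (monomial_fun d a)"
      and a: "\<forall>i\<ge>d. a i = 0" "(\<Sum>i<d. a i) = t"
      unfolding monomials_def by blast
    have "(\<Sum>j<d. (a(i := Suc (a i))) j) = Suc t" "\<forall>j\<ge>d. (a(i := Suc (a i))) j = 0"
      using assms(2) a by (simp_all add: fun_upd_Suc_eq sum.distrib)
    then show "m \<in> monomials (Suc t) d"
      unfolding monomials_def m monomial_fun_increment[OF assms(2), symmetric]
      by blast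
  qed
  then have "fs.span (?times_var ` monomials t d) \<subseteq> fs.span (monomials (Suc t) d)"
    by (rule fs.span_mono[THEN order_trans]) simp
  then show ?thesis
    using assms(1) module_hom.span_image[OF hom] by blast
qed

lemma power_linear_form_mem_Hom: "(\<lambda>x. (\<Sum>i<d. c i * x i) ^ t) \<in> Hom t d"
  unfolding Hom_eq_span_monomials
proof (induction t)
  case 0
  have "monomial_fun d (\<lambda>_. 0) \<in> monomials 0 d"
    unfolding monomials_def by auto
  then show ?case
    by (simp add: monomial_fun_def fs.span_base)
next
  case (Suc t)
  have "(\<lambda>x. (\<Sum>i<d. c i * x i) ^ Suc t)
      = (\<Sum>i<d. fscale (c i) (\<lambda>x. x i * (\<Sum>i<d. c i * x i) ^ t))"
    by (simp add: fun_eq_iff fscale_def sum_fun_apply sum_distrib_right algebra_simps)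
  also have "\<dots> \<in> fs.span (monomials (Suc t) d)"
    using Suc times_var_mem_span_monomials by (intro fs.span_sum fs.span_scale) auto
  finally show ?case .
qed

lemma finite_card_monomials:
  assumes "d \<ge> 1"
  shows "finite (monomials t d) \<and> card (monomials t d) \<le> (t + d - 1) choose t"
proof -
  define E where "E = {a::nat \<Rightarrow> nat. (\<forall>i\<ge>d. a i = 0) \<and> (\<Sum>i<d. a i) = t}"
  define L where "L = {l::nat list. length l = d \<and> sum_list l = t}"
  have card_L: "card L = (t + d - 1) choose t"
    unfolding L_def by (rule card_length_sum_list)
  then have "finite L"
    using assms by (intro card_ge_0_finite) simp
  have "inj_on (\<lambda>a. map a [0..<d]) E"
  proof (rule inj_onI, rule ext)
    fix a b i assume "a \<in> E" "b \<in> E" "map a [0..<d] = map b [0..<d]"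
    then show "a i = b i"
      unfolding E_def by (cases "i < d") auto
  qed
  moreover have "(\<lambda>a. map a [0..<d]) ` E \<subseteq> L"
    by (auto simp: E_def L_def sum_list_sum_nth atLeast0LessThan)
  ultimately have "finite E \<and> card E \<le> card L"
    using \<open>finite L\<close> inj_on_finite card_inj_on_le by blast
  moreover have "monomials t d = monomial_fun d ` E"
    unfolding monomials_def E_def by blast
  ultimately show ?thesis
    using card_L card_image_le order_trans by fastforce
qed

section \<open>Sparse polynomials and generalized Vandermonde matrices\<close>

lemma Rolle_interlacing:
  fixes g g' :: "real \<Rightarrow> real" and r :: "nat \<Rightarrow> real"
  assumes deriv: "\<And>x. (g has_real_derivative g' x) (at x)"
    and roots: "\<And>i. i \<le> k \<Longrightarrow> g (r i) = 0"
    and incr: "\<And>i. i < k \<Longrightarrow> r i < r (Suc i)"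
  obtains z where "\<And>i. i < k \<Longrightarrow> r i < z i \<and> z i < r (Suc i) \<and> g' (z i) = 0"
proof -
  have "\<exists>z. r i < z \<and> z < r (Suc i) \<and> g' z = 0" if i: "i < k" for i
  proof -
    have "continuous_on {r i..r (Suc i)} g"
      using deriv by (meson DERIV_isCont continuous_at_imp_continuous_on)
    moreover have "g differentiable (at x)" for x
      using deriv real_differentiable_def by blast
    moreover have "g (r i) = g (r (Suc i))"
      using roots i by simp
    ultimately obtain z where "r i < z" "z < r (Suc i)" "DERIV g z :> 0"
      using Rolle[OF incr[OF i], of g] by blast
    then show ?thesis
      using DERIV_unique deriv by blast
  qed
  then show ?thesis
    using that by metis
qed

text \<open>Rolle's theorem applied to \<open>p(x) / x ^ e0\<close>, whose derivative times \<open>x ^ (e0 + 1)\<close>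
  is the polynomial in the conclusion.\<close>

lemma sparse_poly_Rolle:
  fixes c :: "nat \<Rightarrow> real" and r :: "nat \<Rightarrow> real"
  assumes "finite E" "\<And>e. e \<in> E \<Longrightarrow> e0 \<le> e"
    and "\<And>i. i < k \<Longrightarrow> r i < r (Suc i)" "\<And>i. i \<le> k \<Longrightarrow> 0 < r i"
    and "\<And>i. i \<le> k \<Longrightarrow> (\<Sum>e\<in>E. c e * r i ^ e) = 0"
  obtains z where "\<And>i. i < k \<Longrightarrow> r i < z i \<and> z i < r (Suc i)"
    and "\<And>i. i < k \<Longrightarrow> (\<Sum>e\<in>E. c e * real (e - e0) * z i ^ e) = 0"
proof -
  define g where "g x = (\<Sum>e\<in>E. c e * x ^ (e - e0))" for x :: real
  define g' where "g' x = (\<Sum>e\<in>E. c e * (real (e - e0) * x ^ (e - Suc e0)))" for x :: real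
  have "(g has_real_derivative g' x) (at x)" for x
    unfolding g_def g'_def by (auto intro!: derivative_eq_intros simp: mult.commute)
  moreover have "g (r i) = 0" if "i \<le> k" for i
  proof -
    have "r i ^ e0 * g (r i) = (\<Sum>e\<in>E. c e * r i ^ e)"
      unfolding g_def sum_distrib_left using assms(2)
      by (intro sum.cong) (auto simp: power_add[symmetric])
    then show ?thesis
      using assms(4,5)[OF that] by simp
  qed
  ultimately obtain z where z: "\<And>i. i < k \<Longrightarrow> r i < z i \<and> z i < r (Suc i) \<and> g' (z i) = 0"
    using Rolle_interlacing[of g g' k r] assms(3) by auto
  have factor: "(\<Sum>e\<in>E. c e * real (e - e0) * x ^ e) = x ^ Suc e0 * g' x" for x
    unfolding g'_def sum_distrib_left
  proof (rule sum.cong[OF refl])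
    fix e assume "e \<in> E"
    then consider "e = e0" | "e = Suc e0 + (e - Suc e0)"
      using assms(2) by fastforce
    then show "c e * real (e - e0) * x ^ e
        = x ^ Suc e0 * (c e * (real (e - e0) * x ^ (e - Suc e0)))"
    proof cases
      case 2
      then have "x ^ e = x ^ Suc e0 * x ^ (e - Suc e0)"
        by (metis power_add)
      then show ?thesis
        by simp
    qed simp
  qed
  show ?thesis
  proof (rule that)
    show "r i < z i \<and> z i < r (Suc i)" "(\<Sum>e\<in>E. c e * real (e - e0) * z i ^ e) = 0"
      if "i < k" for i
      using z[OF that] factor[of "z i"] by simp_all
  qed
qed

lemma sparse_poly_coeff_zero_if_increasing_roots:
  fixes c :: "nat \<Rightarrow> real" and r :: "nat \<Rightarrow> real"
  assumes "finite E" "card E \<le> k"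
    and "\<And>i. Suc i < k \<Longrightarrow> r i < r (Suc i)" "\<And>i. i < k \<Longrightarrow> 0 < r i"
    and "\<And>i. i < k \<Longrightarrow> (\<Sum>e\<in>E. c e * r i ^ e) = 0"
    and "e \<in> E"
  shows "c e = 0"
  using assms
proof (induction k arbitrary: E c r e)
  case 0
  then show ?case by auto
next
  case (Suc k)
  define e0 where "e0 = Min E"
  have e0: "e0 \<in> E" "\<And>e. e \<in> E \<Longrightarrow> e0 \<le> e"
    using Suc.prems(1,6) unfolding e0_def by (auto intro: Min_in)
  obtain z where z: "\<And>i. i < k \<Longrightarrow> r i < z i \<and> z i < r (Suc i)"
    and z_roots: "\<And>i. i < k \<Longrightarrow> (\<Sum>e\<in>E. c e * real (e - e0) * z i ^ e) = 0"
  proof (rule sparse_poly_Rolle[of E e0 k r c])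
    show "r i < r (Suc i)" if "i < k" for i
      using Suc.prems(3) that by simp
    show "0 < r i" "(\<Sum>e\<in>E. c e * r i ^ e) = 0" if "i \<le> k" for i
      using Suc.prems(4,5) that by simp_all
  qed (use Suc.prems(1) e0(2) that in auto)
  have "c e * real (e - e0) = 0" if "e \<in> E - {e0}" for e
  proof (rule Suc.IH[where r = z and c = "\<lambda>e. c e * real (e - e0)"])
    show "(\<Sum>e\<in>E - {e0}. c e * real (e - e0) * z i ^ e) = 0" if "i < k" for i
      using z_roots[OF that] Suc.prems(1) e0(1) by (simp add: sum.remove[of E e0])
    show "z i < z (Suc i)" if "Suc i < k" for i
      using z[of i] z[of "Suc i"] that by force
    show "0 < z i" if "i < k" for i
      using z[OF that] Suc.prems(4)[of i] that by force
  qed (use Suc.prems(1,2) e0(1) that in auto)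
  then have c_rest: "c e = 0" if "e \<in> E - {e0}" for e
    using that e0(2) by force
  then have "c e0 * r 0 ^ e0 = 0"
    using Suc.prems(1) Suc.prems(5)[of 0] e0(1) by (simp add: sum.remove[of E e0])
  then show ?case
    using Suc.prems(4)[of 0] c_rest Suc.prems(6) by (cases "e = e0") auto
qed

lemma sparse_poly_coeff_zero_if_roots:
  fixes c :: "'i \<Rightarrow> real" and \<beta> :: "'i \<Rightarrow> nat"
  assumes "finite I" "inj_on \<beta> I" "finite R" "card I \<le> card R" "\<And>x. x \<in> R \<Longrightarrow> 0 < x"
    and "\<And>x. x \<in> R \<Longrightarrow> (\<Sum>i\<in>I. c i * x ^ \<beta> i) = 0" and "i \<in> I"
  shows "c i = 0"
proof -
  let ?rs = "sorted_list_of_set R"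
  let ?c = "\<lambda>e. c (the_inv_into I \<beta> e)"
  have rs_mem: "?rs ! j \<in> R" if "j < card R" for j
    using assms(3) that nth_mem[of j ?rs] by simp
  have "?c (\<beta> i) = 0"
  proof (rule sparse_poly_coeff_zero_if_increasing_roots[where k = "card R" and r = "(!) ?rs"])
    show "card (\<beta> ` I) \<le> card R"
      using assms(4) card_image_le[OF assms(1)] by (meson order_trans)
    show "?rs ! j < ?rs ! Suc j" if "Suc j < card R" for j
      using that sorted_wrt_nth_less[of "(<)" ?rs] by simp
    show "0 < ?rs ! j" if "j < card R" for j
      using assms(5) rs_mem[OF that] .
    show "(\<Sum>e\<in>\<beta> ` I. ?c e * (?rs ! j) ^ e) = 0" if "j < card R" for j
      using assms(6)[OF rs_mem[OF that]]
      by (simp add: sum.reindex[OF assms(2)] the_inv_into_f_f[OF assms(2)])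
  qed (use assms(1,7) in auto)
  then show ?thesis
    using the_inv_into_f_f[OF assms(2,7)] by simp
qed

lemma det_generalized_vandermonde_neq_0:
  fixes v :: "nat \<Rightarrow> real" and \<beta> :: "nat \<Rightarrow> nat"
  assumes "\<And>i. i < d \<Longrightarrow> 0 < v i" "inj_on v {0..<d}" "inj_on \<beta> {0..<d}"
  shows "det (mat d d (\<lambda>(r, c). v c ^ \<beta> r)) \<noteq> 0"
proof
  let ?A = "mat d d (\<lambda>(r, c). v c ^ \<beta> r)"
  assume "det ?A = 0"
  then have "det ?A\<^sup>T = 0"
    by (simp add: det_transpose[of _ d])
  then obtain y where y: "y \<in> carrier_vec d" "y \<noteq> 0\<^sub>v d" "?A\<^sup>T *\<^sub>v y = 0\<^sub>v d"
    using det_0_iff_vec_prod_zero[of "?A\<^sup>T" d] by auto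
  have "(\<Sum>r\<in>{0..<d}. y $ r * x ^ \<beta> r) = 0" if "x \<in> v ` {0..<d}" for x
  proof -
    obtain c where c: "c < d" "x = v c"
      using \<open>x \<in> v ` {0..<d}\<close> by auto
    then have "(?A\<^sup>T *\<^sub>v y) $ c = 0"
      using y(3) by simp
    then show ?thesis
      using c y(1) by (simp add: scalar_prod_def mult.commute)
  qed
  then have "y $ r = 0" if "r < d" for r
    using that assms card_image[OF assms(2)]
    by (intro sparse_poly_coeff_zero_if_roots[of "{0..<d}" \<beta> "v ` {0..<d}" "(\<lambda>r. y $ r)"]) auto
  then show False
    using y(1,2) by auto
qed

section \<open>The rows of \<open>Q\<close>\<close>

definition bordered_vandermonde ::
    "nat \<Rightarrow> (nat \<Rightarrow> real) \<Rightarrow> (nat \<Rightarrow> nat) \<Rightarrow> nat set \<Rightarrow> (nat \<Rightarrow> real) \<Rightarrow> real mat" where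
  "bordered_vandermonde d v \<alpha> S w = mat d d (\<lambda>(r, c).
     if r = 0 then w c else vandermonde v \<alpha> (sorted_list_of_set S ! (r - 1)) c)"

lemma nth_sorted_list_of_set_remove:
  assumes "j < d" "c < d - 1"
  shows "sorted_list_of_set ({0..<d} - {j}) ! c = (if c < j then c else Suc c)"
proof -
  have "{0..<d} - {j} = set ([0..<j] @ [Suc j..<d])"
    using assms by auto
  moreover have "sorted ([0..<j] @ [Suc j..<d])" "distinct ([0..<j] @ [Suc j..<d])"
    by (auto simp: sorted_append)
  ultimately have "sorted_list_of_set ({0..<d} - {j}) = [0..<j] @ [Suc j..<d]"
    by (simp only: sorted_list_of_set_sort_remdups distinct_remdups_id sorted_sort_id)
  then show ?thesis
    using assms by (simp add: nth_append)
qed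

lemma det_bordered_vandermonde:
  assumes "d \<ge> 1"
  shows "det (bordered_vandermonde d v \<alpha> S w) = (\<Sum>c<d. (-1) ^ c * w c * Qentry d v \<alpha> S c)"
proof -
  let ?W = "bordered_vandermonde d v \<alpha> S w"
  have "det ?W = (\<Sum>c<d. ?W $$ (0, c) * cofactor ?W 0 c)"
    using assms by (intro laplace_expansion_row) (auto simp: bordered_vandermonde_def)
  also have "\<dots> = (\<Sum>c<d. (-1) ^ c * w c * Qentry d v \<alpha> S c)"
  proof (rule sum.cong[OF refl])
    fix c assume c: "c \<in> {..<d}"
    have "mat_delete ?W 0 c = mat (d - 1) (d - 1) (\<lambda>(r, c').
        vandermonde v \<alpha> (sorted_list_of_set S ! r) (sorted_list_of_set ({0..<d} - {c}) ! c'))"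
      using c by (intro eq_matI)
        (auto simp: mat_delete_def bordered_vandermonde_def nth_sorted_list_of_set_remove)
    then show "?W $$ (0, c) * cofactor ?W 0 c = (-1) ^ c * w c * Qentry d v \<alpha> S c"
      using c assms by (simp add: cofactor_def Qentry_def bordered_vandermonde_def)
  qed
  finally show ?thesis .
qed

lemma det_bordered_vandermonde_eq_0:
  assumes "finite S" "card S = d - 1" "j \<in> S"
  shows "det (bordered_vandermonde d v \<alpha> S (\<lambda>c. v c ^ \<alpha> j)) = 0"
proof -
  obtain r where r: "r < card S" "sorted_list_of_set S ! r = j"
    using assms by (metis in_set_conv_nth length_sorted_list_of_set set_sorted_list_of_set)
  then show ?thesis
    using assms(2)
    by (intro det_identical_rows[of _ d 0 "Suc r"])
      (auto simp: bordered_vandermonde_def vandermonde_def)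
qed

lemma det_bordered_vandermonde_neq_0:
  assumes "S \<subseteq> {0..<N}" "card S = d - 1" "j < N" "j \<notin> S" "d \<ge> 1"
    and "inj_on \<alpha> {0..<N}" "\<And>i. i < d \<Longrightarrow> 0 < v i" "inj_on v {0..<d}"
  shows "det (bordered_vandermonde d v \<alpha> S (\<lambda>c. v c ^ \<alpha> j)) \<noteq> 0"
proof -
  let ?rows = "j # sorted_list_of_set S"
  have finite_S: "finite S"
    using assms(1) finite_subset by blast
  have length_rows: "length ?rows = d"
    using assms(2,5) finite_S by simp
  have "bordered_vandermonde d v \<alpha> S (\<lambda>c. v c ^ \<alpha> j) = mat d d (\<lambda>(r, c). v c ^ (\<alpha> \<circ> (!) ?rows) r)"
    by (intro eq_matI) (auto simp: bordered_vandermonde_def vandermonde_def nth_Cons')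
  moreover have "inj_on (\<alpha> \<circ> (!) ?rows) {0..<d}"
  proof (rule comp_inj_on)
    show "inj_on ((!) ?rows) {0..<d}"
      using assms(4) finite_S length_rows by (intro inj_on_nth) auto
    show "inj_on \<alpha> ((!) ?rows ` {0..<d})"
      using length_rows assms(1,3) finite_S
      by (intro inj_on_subset[OF assms(6)]) (auto simp: nth_image)
  qed
  ultimately show ?thesis
    using det_generalized_vandermonde_neq_0[OF assms(7,8)] by metis
qed

definition signed_vandermonde_row :: "(nat \<Rightarrow> real) \<Rightarrow> (nat \<Rightarrow> nat) \<Rightarrow> nat \<Rightarrow> nat \<Rightarrow> real" where
  "signed_vandermonde_row v \<alpha> j i = (-1) ^ i * v i ^ \<alpha> j"

lemma mixed_difference_Qpow:
  assumes "d \<ge> 1" "finite U" "card U = t"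
  shows "mixed_difference U (signed_vandermonde_row v \<alpha>) (Qpow t d v \<alpha> S)
    = fact t * (\<Prod>j\<in>U. det (bordered_vandermonde d v \<alpha> S (\<lambda>c. v c ^ \<alpha> j)))"
  using mixed_difference_power_linear_form[OF assms(2), where d = d and q = "Qentry d v \<alpha> S"] assms(3)
  unfolding Qpow_def det_bordered_vandermonde[OF assms(1)]
  by (simp add: signed_vandermonde_row_def algebra_simps)

lemma mixed_difference_Qpow_eq_0_iff:
  assumes "S \<subseteq> {0..<t + d - 1}" "card S = d - 1" "T \<subseteq> {0..<t + d - 1}" "card T = d - 1"
    and "d \<ge> 1" "inj_on \<alpha> {0..<t + d - 1}" "\<And>i. i < d \<Longrightarrow> 0 < v i" "inj_on v {0..<d}"
  shows "mixed_difference ({0..<t + d - 1} - T) (signed_vandermonde_row v \<alpha>) (Qpow t d v \<alpha> S) = 0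
    \<longleftrightarrow> S \<noteq> T"
proof -
  have finite: "finite S" "finite T"
    using assms(1,3) finite_subset by blast+
  have "card ({0..<t + d - 1} - T) = t"
    using assms(3-5) finite by (simp add: card_Diff_subset)
  then have "mixed_difference ({0..<t + d - 1} - T) (signed_vandermonde_row v \<alpha>) (Qpow t d v \<alpha> S) = 0
      \<longleftrightarrow> (\<exists>j\<in>{0..<t + d - 1} - T. det (bordered_vandermonde d v \<alpha> S (\<lambda>c. v c ^ \<alpha> j)) = 0)"
    using mixed_difference_Qpow[OF assms(5)] by simp
  also have "\<dots> \<longleftrightarrow> (\<exists>j\<in>{0..<t + d - 1} - T. j \<in> S)"
  proof -
    have "det (bordered_vandermonde d v \<alpha> S (\<lambda>c. v c ^ \<alpha> j)) = 0 \<longleftrightarrow> j \<in> S"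
      if "j < t + d - 1" for j
      using det_bordered_vandermonde_eq_0[OF finite(1) assms(2)]
        det_bordered_vandermonde_neq_0[OF assms(1,2) that _ assms(5-8)] by blast
    then show ?thesis
      by auto
  qed
  also have "\<dots> \<longleftrightarrow> S \<noteq> T"
    using assms(1) card_subset_eq[OF finite(2), of S] assms(2,4) by auto
  finally show ?thesis .
qed

theorem mainTheorem2:
  fixes d t :: nat and v :: "nat \<Rightarrow> real" and \<alpha> :: "nat \<Rightarrow> nat"
  assumes "d \<ge> 2" and "t \<ge> 1"
    and "\<And>i. i < d \<Longrightarrow> v i > 0"
    and "inj_on v {0..<d}"
    and "inj_on \<alpha> {0..<t + d - 1}"
  defines "Subs \<equiv> {S. S \<subseteq> {0..<t + d - 1} \<and> card S = d - 1}"
  shows "inj_on (Qpow t d v \<alpha>) Subs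
    \<and> Qpow t d v \<alpha> ` Subs \<subseteq> Hom t d
    \<and> \<not> module.dependent fscale (Qpow t d v \<alpha> ` Subs)
    \<and> module.span fscale (Qpow t d v \<alpha> ` Subs) = Hom t d"
proof -
  have d_pos: "d \<ge> 1"
    using assms(1) by simp
  have inj_indep: "inj_on (Qpow t d v \<alpha>) Subs \<and> fs.independent (Qpow t d v \<alpha> ` Subs)"
    using mixed_difference_Qpow_eq_0_iff[OF _ _ _ _ d_pos assms(5,3,4)] module_hom_mixed_difference
    unfolding Subs_def by (intro fs.biorthogonal_inj_on_independent) auto
  have in_Hom: "Qpow t d v \<alpha> ` Subs \<subseteq> Hom t d"
    unfolding Qpow_def using power_linear_form_mem_Hom by blast
  have "card (Qpow t d v \<alpha> ` Subs) = (t + d - 1) choose (d - 1)"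
    using card_image[OF conjunct1[OF inj_indep]] n_subsets[of "{0..<t + d - 1}" "d - 1"]
    unfolding Subs_def by simp
  also have "\<dots> = (t + d - 1) choose t"
    using d_pos binomial_symmetric[of t "t + d - 1"] by simp
  finally have "card (monomials t d) \<le> card (Qpow t d v \<alpha> ` Subs)"
    using finite_card_monomials[OF d_pos] by simp
  then have "fs.span (Qpow t d v \<alpha> ` Subs) = Hom t d"
    using finite_card_monomials[OF d_pos] inj_indep in_Hom
    unfolding Hom_eq_span_monomials by (intro fs.span_eq_if_independent_card_ge) auto
  then show ?thesis
    using inj_indep in_Hom by blast
qed

end
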